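(* Let $0<\eta<\frac{\pi}{2}$ and let $\gamma$ be an open arc in $\mathbb{T}=\partial\Delta$ such that $e^{i\theta}\in\gamma$ for all $\theta\in(-2\eta,2\eta)$. Then there exists a constant $1<C<\infty$ with the following property: if $u$ is a subharmonic function on $\Delta$ with $u\le 1$ on $\Delta$ and $\hat u\le 0$ on $B$, where $B$ is a measurable subset of $\gamma$ with $\frac{\operatorname{mes}(B)}{\operatorname{mes}(\gamma)}\ge 1-\frac{1}{N}$ for some $N>1$, then $$\sup_{\rho=1-\frac{1}{\sqrt N},\ |\zeta|<\eta} u(\rho e^{i\zeta})\le \frac{C}{\sqrt N}.$$
   Context: $\Delta$ is the open unit disc in $\mathbb{C}$, $\mathbb{T}=\partial\Delta$, and $\operatorname{mes}$ denotes arc-length measure on $\mathbb{T}$. For $\zeta\in\mathbb{T}$ and $\alpha>1$ let $\mathcal{A}_\alpha(\zeta)=\{w\in\Delta:|w-\zeta|<\alpha\operatorname{dist}(w,T_\zeta)\}$ where $T_\zeta$ is the tangent line to $\mathbb{T}$ at $\zeta$; for $\zeta\in\mathbb{T}$, $\hat u(\zeta)=\sup_{\alpha>1}\limsup_{w\in\mathcal{A}_\alpha(\zeta),\,w\to\zeta}u(w)$. *)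

theory Defs
  imports "HOL-Analysis.Analysis" "HOL-Library.Liminf_Limsup"
begin

definition unit_disc :: "complex set" where
  "unit_disc = ball 0 1"

text \<open>Subharmonic functions on the unit disc, with values in [-infinity, infinity):
  upper semicontinuous, and satisfying the harmonic-majorant property on every closed
  disc contained in the unit disc (a function harmonic on an open disc is the real part of
  a holomorphic function there).\<close>
definition subharmonic_on_disc :: "(complex \<Rightarrow> ereal) \<Rightarrow> bool" where
  "subharmonic_on_disc u \<longleftrightarrow>
     (\<forall>z\<in>unit_disc. u z < \<infinity>) \<and>
     (\<forall>z\<in>unit_disc. Limsup (at z within unit_disc) u \<le> u z) \<and>
     (\<forall>a r f. r > 0 \<longrightarrow> cball a r \<subseteq> unit_disc \<longrightarrow>
        continuous_on (cball a r) f \<longrightarrow> f holomorphic_on ball a r \<longrightarrow>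
        (\<forall>w\<in>sphere a r. u w \<le> ereal (Re (f w))) \<longrightarrow>
        (\<forall>w\<in>cball a r. u w \<le> ereal (Re (f w))))"

definition tangent_line :: "complex \<Rightarrow> complex set" where
  "tangent_line \<zeta> = {\<zeta> + complex_of_real t * \<i> * \<zeta> | t. True}"

definition approach_region :: "complex \<Rightarrow> real \<Rightarrow> complex set" where
  "approach_region \<zeta> \<alpha> =
     {w \<in> unit_disc. cmod (w - \<zeta>) < \<alpha> * infdist w (tangent_line \<zeta>)}"

definition nt_upper :: "(complex \<Rightarrow> ereal) \<Rightarrow> complex \<Rightarrow> ereal" where
  "nt_upper u \<zeta> = (SUP \<alpha>\<in>{1<..}. Limsup (at \<zeta> within approach_region \<zeta> \<alpha>) u)"

definition circle_param :: "complex set \<Rightarrow> real set" where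
  "circle_param B = {t \<in> {-pi<..pi}. cis t \<in> B}"

definition circle_measurable :: "complex set \<Rightarrow> bool" where
  "circle_measurable B \<longleftrightarrow> circle_param B \<in> sets lebesgue"

definition mes :: "complex set \<Rightarrow> real" where
  "mes B = measure lebesgue (circle_param B)"

definition open_arc :: "complex set \<Rightarrow> bool" where
  "open_arc \<gamma> \<longleftrightarrow> (\<exists>a b. a < b \<and> b \<le> a + 2 * pi \<and> \<gamma> = cis ` {a<..<b})"

end

theory Submission
  imports Defs
begin

text \<open>Put \<open>s = 1/\<surd>N\<close>. Since \<open>\<hat>u \<le> 0\<close> on \<open>B\<close>, continuity of measure gives a height \<open>h\<close> such that,
  outside a set of measure \<open>< s\<^sup>2\<close>, every point of \<open>B\<close> carries a truncated Stolz cone of height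
  \<open>h\<close> on which \<open>u < s\<close>. On the circle \<open>|z| = 1 - m\<close>, \<open>m \<le> min h (s\<^sup>2) / 2\<close>, cover the set
  \<open>{u > s}\<close> by arcs of length \<open>m/2\<close> and put a pole in each; then \<open>s + m \<Sum> Re ((p + z)/(p - z))\<close>
  is a harmonic majorant of \<open>u\<close> on the disc \<open>|z| \<le> 1 - m\<close>. At \<open>(1 - s) e\<^sup>i\<^sup>\<phi>\<close> a pole near
  the arc \<open>(-2\<eta>, 2\<eta>)\<close> contributes \<open>O(1/s)\<close>, but such poles are few: their cells avoid the good
  cones, so their total length is \<open>O(s\<^sup>2)\<close>. The \<open>O(1/m)\<close> remaining poles are at angular
  distance \<open>\<ge> \<eta>\<close> and contribute \<open>O(s/(1 - cos \<eta>))\<close> each.\<close>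

section \<open>Trigonometric estimates and the Poisson kernel\<close>

lemma norm_scaled_cis_diff_squared:
  "(cmod (of_real a * cis t - of_real b * cis p))\<^sup>2 = a\<^sup>2 + b\<^sup>2 - 2*a*b*cos (t - p)"
proof -
  have "(cmod (of_real a * cis t - of_real b * cis p))\<^sup>2
      = (a * cos t - b * cos p)\<^sup>2 + (a * sin t - b * sin p)\<^sup>2"
    by (simp add: cmod_power2)
  also have "\<dots> = a\<^sup>2 * ((cos t)\<^sup>2 + (sin t)\<^sup>2) + b\<^sup>2 * ((cos p)\<^sup>2 + (sin p)\<^sup>2)
        - 2*a*b*(cos t * cos p + sin t * sin p)"
    by algebra
  finally show ?thesis
    by (simp add: cos_diff)
qed

lemma norm_of_real_mult_cis: "0 \<le> r \<Longrightarrow> cmod (of_real r * cis t) = r"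
  by (simp add: norm_mult)

lemma norm_cis_diff_le: "cmod (cis a - cis b) \<le> \<bar>a - b\<bar>"
proof -
  have "(cmod (cis a - cis b))\<^sup>2 = 2 - 2 * cos (a - b)"
    using norm_scaled_cis_diff_squared[of 1 a 1 b] by simp
  also have "\<dots> = 4 * (sin ((a - b) / 2))\<^sup>2"
  proof -
    have "2 * ((a - b) / 2) = a - b"
      by simp
    then have "cos (a - b) = 1 - 2 * (sin ((a - b) / 2))\<^sup>2"
      using cos_double_sin[of "(a - b) / 2"] by (simp only:)
    then show ?thesis
      by simp
  qed
  also have "\<dots> \<le> 4 * ((a - b) / 2)\<^sup>2"
    using abs_sin_x_le_abs_x[of "(a - b) / 2"] by (simp only: abs_le_square_iff)
  also have "\<dots> = \<bar>a - b\<bar>\<^sup>2"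
    by (simp add: power_divide)
  finally show ?thesis
    by (rule power2_le_imp_le) simp
qed

lemma cos_le_cos_if_far_from_zero:
  fixes x e :: real
  assumes "0 < e" "e \<le> pi" "e \<le> \<bar>x\<bar>" "\<bar>x\<bar> \<le> 2*pi - e"
  shows "cos x \<le> cos e"
proof (cases "\<bar>x\<bar> \<le> pi")
  case True
  then show ?thesis
    using assms cos_monotone_0_pi_le[of e "\<bar>x\<bar>"] by simp
next
  case False
  have "cos x = cos (2*pi - \<bar>x\<bar>)"
    by (metis cos_abs_real cos_2pi_minus)
  also have "\<dots> \<le> cos e"
    using assms False cos_monotone_0_pi_le[of e "2*pi - \<bar>x\<bar>"] by simp
  finally show ?thesis .
qed

definition poisson_kernel :: "complex \<Rightarrow> complex \<Rightarrow> real" where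
  "poisson_kernel p z = ((cmod p)\<^sup>2 - (cmod z)\<^sup>2) / (cmod (p - z))\<^sup>2"

lemma Re_herglotz_kernel:
  assumes "p \<noteq> z"
  shows "Re ((p + z) / (p - z)) = poisson_kernel p z"
proof -
  have "Re (p + z) * Re (p - z) + Im (p + z) * Im (p - z) = (cmod p)\<^sup>2 - (cmod z)\<^sup>2"
    unfolding cmod_power2 by (simp add: power2_eq_square algebra_simps)
  moreover have "(Re (p - z))\<^sup>2 + (Im (p - z))\<^sup>2 = (cmod (p - z))\<^sup>2"
    unfolding cmod_power2 by simp
  ultimately show ?thesis
    unfolding Re_divide poisson_kernel_def by metis
qed

lemma poisson_kernel_nonneg: "cmod z \<le> cmod p \<Longrightarrow> 0 \<le> poisson_kernel p z"
  unfolding poisson_kernel_def by (simp add: power_mono)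

lemma poisson_kernel_le:
  assumes "(cmod p)\<^sup>2 - (cmod z)\<^sup>2 \<le> a" "0 \<le> a" "0 < b" "b \<le> (cmod (p - z))\<^sup>2"
  shows "poisson_kernel p z \<le> a / b"
proof -
  have "poisson_kernel p z \<le> a / (cmod (p - z))\<^sup>2"
    unfolding poisson_kernel_def using assms by (intro divide_right_mono) auto
  also have "\<dots> \<le> a / b"
    using assms by (intro divide_left_mono) (auto intro!: mult_pos_pos)
  finally show ?thesis .
qed

section \<open>Measure on the circle\<close>

lemma circle_param_subset: "circle_param B \<subseteq> {-pi<..pi}"
  by (auto simp: circle_param_def)

lemma circle_param_mono: "B \<subseteq> B' \<Longrightarrow> circle_param B \<subseteq> circle_param B'"
  by (auto simp: circle_param_def)

lemma circle_param_fmeasurable: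
  "circle_param B \<in> sets lebesgue \<Longrightarrow> circle_param B \<in> fmeasurable lebesgue"
  by (rule fmeasurableI2[OF _ circle_param_subset]) (auto intro: bounded_set_imp_lmeasurable)

lemma circle_param_open_arc_lebesgue:
  assumes "open_arc \<gamma>"
  shows "circle_param \<gamma> \<in> sets lebesgue"
proof -
  obtain a b where ab: "\<gamma> = cis ` {a<..<b}"
    using assms unfolding open_arc_def by blast
  have "circle_param \<gamma> = {-pi<..pi} \<inter> (\<Union>n::int. {a + 2*pi*n<..<b + 2*pi*n})"
  proof (intro set_eqI iffI)
    fix t assume "t \<in> circle_param \<gamma>"
    then obtain x where t: "t \<in> {-pi<..pi}" and x: "x \<in> {a<..<b}" "cis t = cis x"
      using ab by (auto simp: circle_param_def)
    then have "sin t = sin x \<and> cos t = cos x"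
      by (metis cis.sel)
    then obtain n :: int where "t = x + 2*pi*n"
      using sin_cos_eq_iff by blast
    with x have "t \<in> {a + 2*pi*n<..<b + 2*pi*n}"
      by auto
    with t show "t \<in> {-pi<..pi} \<inter> (\<Union>n::int. {a + 2*pi*n<..<b + 2*pi*n})"
      by auto
  next
    fix t assume "t \<in> {-pi<..pi} \<inter> (\<Union>n::int. {a + 2*pi*n<..<b + 2*pi*n})"
    then obtain n :: int where t: "t \<in> {-pi<..pi}" "a + 2*pi*n < t" "t < b + 2*pi*n"
      by auto
    have "cis t = cis (t - 2*pi*n)"
      using sin_cos_eq_iff[of t "t - 2*pi*n"] by (auto simp: complex_eq_iff)
    moreover have "t - 2*pi*n \<in> {a<..<b}"
      using t by auto
    ultimately show "t \<in> circle_param \<gamma>"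
      using ab t by (auto simp: circle_param_def)
  qed
  moreover have "open (\<Union>n::int. {a + 2*pi*n<..<b + 2*pi*n})"
    by (intro open_UN) auto
  ultimately show ?thesis
    by (auto intro: sets.Int)
qed

lemma measure_circle_param_diff_le:
  assumes "open_arc \<gamma>" "B \<subseteq> \<gamma>" "circle_measurable B" "1 < N"
    and ratio: "1 - 1 / N \<le> mes B / mes \<gamma>"
    and I: "I \<in> sets lebesgue" "I \<subseteq> circle_param \<gamma>"
  shows "measure lebesgue (I - circle_param B) \<le> 2 * pi / N"
proof -
  have \<gamma>: "circle_param \<gamma> \<in> fmeasurable lebesgue"
    using assms(1) by (intro circle_param_fmeasurable circle_param_open_arc_lebesgue)
  have B: "circle_param B \<in> sets lebesgue" "circle_param B \<subseteq> circle_param \<gamma>"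
    using assms(2,3) by (auto simp: circle_measurable_def circle_param_mono)
  have "{-pi<..pi} \<in> fmeasurable lebesgue"
    by (rule bounded_set_imp_lmeasurable) auto
  then have "mes \<gamma> \<le> measure lebesgue {-pi<..pi}"
    unfolding mes_def using \<gamma> by (intro measure_mono_fmeasurable[OF circle_param_subset]) auto
  then have "mes \<gamma> \<le> 2 * pi"
    by simp
  moreover have "0 < mes \<gamma>"
  proof (rule ccontr)
    assume "\<not> 0 < mes \<gamma>"
    then have "mes \<gamma> = 0"
      by (simp add: mes_def measure_nonneg order.antisym)
    then show False
      using ratio \<open>1 < N\<close> by (simp add: field_simps)
  qed
  ultimately have "mes \<gamma> - mes B \<le> 2 * pi / N"
    using ratio \<open>1 < N\<close> by (simp add: le_divide_eq field_simps)
  moreover have "measure lebesgue (circle_param \<gamma> - circle_param B) = mes \<gamma> - mes B"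
    unfolding mes_def using \<gamma> B by (intro measure_Diff) (auto simp: fmeasurable_def)
  moreover have "measure lebesgue (I - circle_param B) \<le> measure lebesgue (circle_param \<gamma> - circle_param B)"
    using \<gamma> B I by (intro measure_mono_fmeasurable fmeasurable_Diff) auto
  ultimately show ?thesis
    by simp
qed

lemma measure_diff_decreasing_family_small:
  fixes F :: "real \<Rightarrow> 'a set"
  assumes A: "A \<in> fmeasurable M"
    and F: "\<And>h. F h \<in> sets M" "\<And>h h'. h \<le> h' \<Longrightarrow> F h' \<subseteq> F h"
    and cover: "\<And>x. x \<in> A \<Longrightarrow> \<exists>h>0. x \<in> F h"
    and "0 < \<epsilon>"
  shows "\<exists>h>0. measure M (A - F h) < \<epsilon>"
proof -
  define S where "S n = A \<inter> F (1 / (real n + 1))" for n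
  have "incseq S"
  proof (rule incseq_SucI)
    fix n
    have "1 / (real (Suc n) + 1) \<le> 1 / (real n + 1)"
      by (rule divide_left_mono) auto
    then show "S n \<subseteq> S (Suc n)"
      using F(2) unfolding S_def by blast
  qed
  moreover have "(\<Union>n. S n) = A"
  proof (intro antisym subsetI)
    fix x assume "x \<in> A"
    then obtain h where "0 < h" "x \<in> F h"
      using cover by blast
    moreover obtain n where "inverse (real (Suc n)) < h"
      using reals_Archimedean[OF \<open>0 < h\<close>] by blast
    ultimately have "x \<in> S n"
      using \<open>x \<in> A\<close> F(2)[of "1 / (real n + 1)" h] by (auto simp: S_def field_simps)
    then show "x \<in> (\<Union>n. S n)"
      by blast
  qed (auto simp: S_def)
  moreover have "range S \<subseteq> sets M"
    using A F(1) by (auto simp: S_def)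
  ultimately have "(\<lambda>n. measure M (S n)) \<longlonglongrightarrow> measure M A"
    using A Lim_measure_incseq[of S M] by (auto simp: fmeasurable_def)
  moreover have "measure M A - \<epsilon> < measure M A"
    using \<open>0 < \<epsilon>\<close> by simp
  ultimately obtain n where n: "measure M A - \<epsilon> < measure M (S n)"
    using order_tendstoD(1) eventually_sequentially by (metis order.refl)
  have "measure M (A - F (1 / (real n + 1))) = measure M (A - S n)"
    by (simp add: S_def Diff_Int)
  also have "\<dots> = measure M A - measure M (S n)"
    using A F(1) by (intro measure_Diff) (auto simp: S_def fmeasurable_def)
  finally show ?thesis
    using n by (intro exI[of _ "1 / (real n + 1)"]) auto
qed

section \<open>Truncated cones on which \<open>u\<close> is small\<close>

definition cone_sublevel :: "(complex \<Rightarrow> ereal) \<Rightarrow> real \<Rightarrow> real \<Rightarrow> real set" where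
  "cone_sublevel u c h =
     {\<theta>. \<forall>r \<tau>. 1 - h < r \<longrightarrow> r < 1 \<longrightarrow> \<bar>\<tau> - \<theta>\<bar> < 1 - r \<longrightarrow> u (of_real r * cis \<tau>) < ereal c}"

lemma closed_cone_sublevel: "closed (cone_sublevel u c h)"
proof -
  let ?W = "{(r, \<tau>). 1 - h < r \<and> r < 1 \<and> \<not> u (of_real r * cis \<tau>) < ereal c}"
  have "- cone_sublevel u c h = (\<Union>p\<in>?W. ball (snd p) (1 - fst p))"
    by (auto simp: cone_sublevel_def dist_real_def)
  moreover have "open (\<Union>p\<in>?W. ball (snd p) (1 - fst p))"
    by (intro open_UN) auto
  ultimately show ?thesis
    by (simp add: closed_def)
qed

lemma cone_sublevel_antimono: "h \<le> h' \<Longrightarrow> cone_sublevel u c h' \<subseteq> cone_sublevel u c h"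
  unfolding cone_sublevel_def by force

lemma cone_subset_approach_region:
  assumes "0 < r" "\<bar>\<tau> - \<theta>\<bar> < 1 - r"
  shows "of_real r * cis \<tau> \<in> approach_region (cis \<theta>) 3"
    and "cmod (of_real r * cis \<tau> - cis \<theta>) < 2 * (1 - r)"
proof -
  define w where "w = of_real r * cis \<tau>"
  have norm_w: "cmod w = r"
    using assms unfolding w_def by (intro norm_of_real_mult_cis) simp
  have "cmod (w - cis \<tau>) = 1 - r"
  proof -
    have "w - cis \<tau> = of_real (r - 1) * cis \<tau>"
      by (simp add: w_def algebra_simps)
    then show ?thesis
      using assms by (simp only: norm_mult norm_of_real norm_cis) simp
  qed
  then have "cmod (w - cis \<theta>) \<le> (1 - r) + \<bar>\<tau> - \<theta>\<bar>"
    using norm_triangle_ineq[of "w - cis \<tau>" "cis \<tau> - cis \<theta>"] norm_cis_diff_le[of \<tau> \<theta>] by simp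
  then show dist: "cmod (of_real r * cis \<tau> - cis \<theta>) < 2 * (1 - r)"
    using assms by (simp add: w_def)
  have T: "tangent_line (cis \<theta>) \<noteq> {}"
    unfolding tangent_line_def by auto
  have "1 - r \<le> infdist w (tangent_line (cis \<theta>))"
    unfolding infdist_notempty[OF T]
  proof (rule cINF_greatest[OF T])
    fix y assume "y \<in> tangent_line (cis \<theta>)"
    then obtain t where y: "y = cis \<theta> + of_real t * \<i> * cis \<theta>"
      unfolding tangent_line_def by auto
    \<comment> \<open>rotate the tangent line at \<open>cis \<theta>\<close> to the vertical line \<open>Re = 1\<close>\<close>
    have "cnj (cis \<theta>) * (w - y) = of_real r * cis (\<tau> - \<theta>) - (1 + of_real t * \<i>)"
    proof -
      have "cnj (cis \<theta>) * (w - y)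
          = of_real r * (cnj (cis \<theta>) * cis \<tau>) - (cnj (cis \<theta>) * cis \<theta>) * (1 + of_real t * \<i>)"
        unfolding y w_def by algebra
      then show ?thesis
        by (simp add: cis_cnj cis_mult)
    qed
    then have "Re (cnj (cis \<theta>) * (w - y)) = r * cos (\<tau> - \<theta>) - 1"
      by simp
    moreover have "r * cos (\<tau> - \<theta>) \<le> r"
      using assms(1) by simp
    moreover have "\<bar>Re (cnj (cis \<theta>) * (w - y))\<bar> \<le> dist w y"
      using abs_Re_le_cmod[of "cnj (cis \<theta>) * (w - y)"] by (simp add: norm_mult dist_norm)
    ultimately show "1 - r \<le> dist w y"
      by linarith
  qed
  then show "of_real r * cis \<tau> \<in> approach_region (cis \<theta>) 3"
    using dist norm_w assms unfolding approach_region_def unit_disc_def w_def by auto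
qed

lemma nt_upper_le_zero_imp_cone_sublevel:
  assumes "nt_upper u (cis \<theta>) \<le> 0" "0 < c"
  obtains h where "0 < h" "\<theta> \<in> cone_sublevel u c h"
proof -
  have "Limsup (at (cis \<theta>) within approach_region (cis \<theta>) 3) u \<le> 0"
    using assms(1) unfolding nt_upper_def by (simp add: SUP_le_iff)
  also have "0 < ereal c"
    using assms(2) by simp
  finally have "eventually (\<lambda>x. u x < ereal c) (at (cis \<theta>) within approach_region (cis \<theta>) 3)"
    by (rule Limsup_lessD)
  then obtain d where d: "0 < d"
    "\<And>x. x \<in> approach_region (cis \<theta>) 3 \<Longrightarrow> x \<noteq> cis \<theta> \<Longrightarrow> dist x (cis \<theta>) < d \<Longrightarrow> u x < ereal c"
    unfolding eventually_at by blast
  have "\<theta> \<in> cone_sublevel u c (min 1 (d / 2))"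
    unfolding cone_sublevel_def
  proof (intro CollectI allI impI)
    fix r \<tau> assume r: "1 - min 1 (d / 2) < r" "r < 1" and \<tau>: "\<bar>\<tau> - \<theta>\<bar> < 1 - r"
    then have "0 < r"
      by linarith
    then have "cmod (of_real r * cis \<tau>) = r"
      by (intro norm_of_real_mult_cis) simp
    then have "of_real r * cis \<tau> \<noteq> cis \<theta>"
      using r(2) by auto
    with cone_subset_approach_region[OF \<open>0 < r\<close> \<tau>] r show "u (of_real r * cis \<tau>) < ereal c"
      by (intro d(2)) (auto simp: dist_norm)
  qed
  moreover have "0 < min 1 (d / 2)"
    using d(1) by simp
  ultimately show ?thesis
    using that by blast
qed

lemma exists_cone_height_measure_small:
  assumes "A \<in> fmeasurable lebesgue" "\<forall>\<theta>\<in>A. nt_upper u (cis \<theta>) \<le> 0" "0 < c" "0 < \<epsilon>"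
  obtains h where "0 < h" "measure lebesgue (A - cone_sublevel u c h) < \<epsilon>"
proof -
  have "cone_sublevel u c h \<in> sets lebesgue" for h
    using closed_cone_sublevel[of u c h] by auto
  moreover have "\<exists>h>0. \<theta> \<in> cone_sublevel u c h" if "\<theta> \<in> A" for \<theta>
    using nt_upper_le_zero_imp_cone_sublevel[of u \<theta> c] assms(2,3) that by blast
  ultimately show ?thesis
    using measure_diff_decreasing_family_small[of A lebesgue "cone_sublevel u c" \<epsilon>]
      assms(1,4) cone_sublevel_antimono that by blast
qed

section \<open>A discretised Poisson majorant\<close>

definition grid_point :: "real \<Rightarrow> int \<Rightarrow> real" where
  "grid_point \<delta> j = -pi + of_int j * \<delta>"

definition grid_index :: "real \<Rightarrow> real \<Rightarrow> int" where
  "grid_index \<delta> \<tau> = \<lfloor>(\<tau> + pi) / \<delta> + 1/2\<rfloor>"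

lemma grid_index_eq_iff:
  assumes "0 < \<delta>"
  shows "grid_index \<delta> \<tau> = j \<longleftrightarrow> \<tau> \<in> {grid_point \<delta> j - \<delta>/2..<grid_point \<delta> j + \<delta>/2}"
proof -
  have "grid_index \<delta> \<tau> = j \<longleftrightarrow> of_int j \<le> (\<tau> + pi) / \<delta> + 1/2 \<and> (\<tau> + pi) / \<delta> + 1/2 < of_int j + 1"
    unfolding grid_index_def by (rule floor_eq_iff)
  also have "\<dots> \<longleftrightarrow> \<tau> \<in> {grid_point \<delta> j - \<delta>/2..<grid_point \<delta> j + \<delta>/2}"
    using assms by (simp add: grid_point_def field_simps)
  finally show ?thesis .
qed

lemma grid_point_index_near:
  assumes "0 < \<delta>"
  shows "\<bar>grid_point \<delta> (grid_index \<delta> \<tau>) - \<tau>\<bar> \<le> \<delta>/2"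
proof -
  have "grid_point \<delta> (grid_index \<delta> \<tau>) - \<delta>/2 \<le> \<tau>" "\<tau> < grid_point \<delta> (grid_index \<delta> \<tau>) + \<delta>/2"
    using grid_index_eq_iff[OF assms, of \<tau> "grid_index \<delta> \<tau>"] by auto
  then show ?thesis
    by linarith
qed

lemma grid_index_range:
  assumes "0 < \<delta>" "\<tau> \<in> {-pi<..pi}"
  shows "grid_index \<delta> \<tau> \<in> {0..\<lceil>2*pi/\<delta>\<rceil>}"
proof -
  have "0 \<le> (\<tau> + pi) / \<delta>" "(\<tau> + pi) / \<delta> \<le> 2*pi/\<delta>"
    using assms by (auto intro: divide_right_mono)
  moreover have "2*pi/\<delta> \<le> of_int \<lceil>2*pi/\<delta>\<rceil>"
    by (rule le_of_int_ceiling)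
  ultimately have "(\<tau> + pi) / \<delta> + 1/2 < of_int \<lceil>2*pi/\<delta>\<rceil> + 1"
    by linarith
  then show ?thesis
    unfolding grid_index_def using \<open>0 \<le> (\<tau> + pi) / \<delta>\<close> by (simp add: floor_le_iff)
qed

text \<open>Each bad cell receives a pole at radius \<open>1 - 3m/4\<close>, so close to every point of the cell on
  the circle \<open>|z| = 1 - m\<close> that \<open>m\<close> times its Poisson kernel exceeds \<open>1\<close> there.\<close>

definition bad_cells :: "(complex \<Rightarrow> ereal) \<Rightarrow> real \<Rightarrow> real \<Rightarrow> int set" where
  "bad_cells u c m = grid_index (m/2) ` {\<tau> \<in> {-pi<..pi}. ereal c < u (of_real (1 - m) * cis \<tau>)}"

definition grid_pole :: "real \<Rightarrow> int \<Rightarrow> complex" where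
  "grid_pole m j = of_real (1 - 3*m/4) * cis (grid_point (m/2) j)"

lemma norm_grid_pole: "m \<le> 1 \<Longrightarrow> cmod (grid_pole m j) = 1 - 3*m/4"
  unfolding grid_pole_def by (rule norm_of_real_mult_cis) simp

lemma bad_cells_subset:
  "0 < m \<Longrightarrow> bad_cells u c m \<subseteq> {0..\<lceil>2*pi/(m/2)\<rceil>}"
  unfolding bad_cells_def using grid_index_range[of "m/2"] by auto

lemma finite_bad_cells: "0 < m \<Longrightarrow> finite (bad_cells u c m)"
  by (rule finite_subset[OF bad_cells_subset]) auto

lemma card_bad_cells_le:
  assumes "0 < m" "m \<le> 1/8"
  shows "m * card (bad_cells u c m) \<le> 17"
proof -
  define M where "M = \<lceil>2*pi/(m/2)\<rceil>"
  have "0 < 2*pi/(m/2)"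
    using assms by simp
  then have "0 \<le> M"
    by (simp add: M_def)
  have "card (bad_cells u c m) \<le> card {0..M}"
    using bad_cells_subset[OF assms(1)] by (intro card_mono) (auto simp: M_def)
  then have "real (card (bad_cells u c m)) \<le> of_int M + 1"
    using \<open>0 \<le> M\<close> by simp
  moreover have "of_int M \<le> 4*pi/m + 1"
    using ceiling_correct[of "2*pi/(m/2)"] by (simp add: M_def)
  ultimately have "m * card (bad_cells u c m) \<le> m * (4*pi/m + 2)"
    using assms by (intro mult_left_mono) linarith+
  also have "\<dots> = 4*pi + 2*m"
    using assms by (simp add: field_simps)
  finally show ?thesis
    using pi_less_4 assms by linarith
qed

lemma bad_cell_near_bad_point:
  assumes "j \<in> bad_cells u c m" "0 < m"
  obtains \<tau> where "\<tau> \<in> {-pi<..pi}" "ereal c < u (of_real (1 - m) * cis \<tau>)"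
    "\<tau> \<in> {grid_point (m/2) j - m/4..<grid_point (m/2) j + m/4}"
proof -
  obtain \<tau> where \<tau>: "\<tau> \<in> {-pi<..pi}" "ereal c < u (of_real (1 - m) * cis \<tau>)"
    and j: "j = grid_index (m/2) \<tau>"
    using assms(1) unfolding bad_cells_def by blast
  have "\<tau> \<in> {grid_point (m/2) j - m/4..<grid_point (m/2) j + m/4}"
    using grid_index_eq_iff[of "m/2" \<tau> j] j assms(2) by simp
  with \<tau> show ?thesis
    using that by blast
qed

lemma one_le_poisson_kernel_grid_pole:
  assumes "0 < m" "m \<le> 1/8" "\<bar>grid_point (m/2) j - \<tau>\<bar> \<le> m/4"
  shows "1 \<le> m * poisson_kernel (grid_pole m j) (of_real (1 - m) * cis \<tau>)"
proof -
  define t where "t = grid_point (m/2) j"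
  define w where "w = of_real (1 - m) * cis \<tau>"
  have norm_w: "cmod w = 1 - m"
    using assms unfolding w_def by (intro norm_of_real_mult_cis) simp
  have norm_p: "cmod (grid_pole m j) = 1 - 3*m/4"
    using assms by (simp add: norm_grid_pole)
  have "grid_pole m j - w = of_real (m/4) * cis t + of_real (1 - m) * (cis t - cis \<tau>)"
    by (simp add: grid_pole_def w_def t_def algebra_simps)
  then have "cmod (grid_pole m j - w) \<le> cmod (of_real (m/4) * cis t) + cmod (of_real (1 - m) * (cis t - cis \<tau>))"
    by (metis norm_triangle_ineq)
  also have "\<dots> = m/4 + (1 - m) * cmod (cis t - cis \<tau>)"
    using assms by (simp only: norm_mult norm_of_real norm_cis)
  also have "\<dots> \<le> m/4 + 1 * (m/4)"
    using assms norm_cis_diff_le[of t \<tau>] unfolding t_def by (intro add_left_mono mult_mono) auto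
  finally have "(cmod (grid_pole m j - w))\<^sup>2 \<le> (m/2)\<^sup>2"
    by (intro power_mono) auto
  also have "\<dots> \<le> m * ((cmod (grid_pole m j))\<^sup>2 - (cmod w)\<^sup>2)"
  proof -
    have "m * ((1 - 3*m/4)\<^sup>2 - (1 - m)\<^sup>2) - (m/2)\<^sup>2 = m\<^sup>2 * (1/4 - 7*m/16)"
      by (simp add: power2_eq_square algebra_simps)
    moreover have "0 \<le> m\<^sup>2 * (1/4 - 7*m/16)"
      using assms by simp
    ultimately show ?thesis
      unfolding norm_p norm_w by linarith
  qed
  finally have "(cmod (grid_pole m j - w))\<^sup>2 \<le> m * ((cmod (grid_pole m j))\<^sup>2 - (cmod w)\<^sup>2)" .
  moreover have "grid_pole m j \<noteq> w"
    using norm_p norm_w assms by auto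
  ultimately show ?thesis
    unfolding poisson_kernel_def w_def[symmetric] by (simp add: le_divide_eq)
qed

lemma le_grid_majorant_on_circle:
  assumes le_one: "\<forall>z\<in>unit_disc. u z \<le> 1"
    and "0 < c" "0 < m" "m \<le> 1/8" "cmod w = 1 - m"
  shows "u w \<le> ereal (c + m * (\<Sum>j\<in>bad_cells u c m. poisson_kernel (grid_pole m j) w))"
proof -
  let ?S = "\<Sum>j\<in>bad_cells u c m. poisson_kernel (grid_pole m j) w"
  have "0 \<le> ?S"
    using assms norm_grid_pole[of m] by (intro sum_nonneg poisson_kernel_nonneg) auto
  show ?thesis
  proof (cases "u w \<le> ereal c")
    case True
    then show ?thesis
      using \<open>0 \<le> ?S\<close> \<open>0 < m\<close> by (simp add: order.trans)
  next
    case False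
    define \<tau> where "\<tau> = Arg w"
    have w: "w = of_real (1 - m) * cis \<tau>"
      using assms(5) rcis_cmod_Arg[of w] by (simp add: rcis_def \<tau>_def)
    have "\<tau> \<in> {-pi<..pi}"
      using Arg_bounded[of w] by (simp add: \<tau>_def)
    with False w have j: "grid_index (m/2) \<tau> \<in> bad_cells u c m"
      unfolding bad_cells_def by auto
    have "1 \<le> m * poisson_kernel (grid_pole m (grid_index (m/2) \<tau>)) w"
      unfolding w using assms grid_point_index_near[of "m/2" \<tau>]
      by (intro one_le_poisson_kernel_grid_pole) auto
    also have "\<dots> \<le> m * ?S"
      using assms j finite_bad_cells[of m u c] norm_grid_pole[of m]
      by (intro mult_left_mono member_le_sum poisson_kernel_nonneg) auto
    finally have "1 \<le> c + m * ?S"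
      using \<open>0 < c\<close> by simp
    moreover have "u w \<le> 1"
      using le_one assms by (auto simp: unit_disc_def)
    ultimately show ?thesis
      by (simp add: one_ereal_def order.trans)
  qed
qed

lemma subharmonic_le_grid_majorant:
  assumes sh: "subharmonic_on_disc u" and le_one: "\<forall>z\<in>unit_disc. u z \<le> 1"
    and "0 < c" "0 < m" "m \<le> 1/8" "z \<in> cball 0 (1 - m)"
  shows "u z \<le> ereal (c + m * (\<Sum>j\<in>bad_cells u c m. poisson_kernel (grid_pole m j) z))"
proof -
  define J where "J = bad_cells u c m"
  define f where "f w = of_real c + of_real m * (\<Sum>j\<in>J. (grid_pole m j + w) / (grid_pole m j - w))" for w
  have pole_outside: "grid_pole m j \<noteq> w" if "w \<in> cball 0 (1 - m)" for j w
    using that norm_grid_pole[of m j] \<open>0 < m\<close> \<open>m \<le> 1/8\<close> by auto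
  have Re_f: "Re (f w) = c + m * (\<Sum>j\<in>J. poisson_kernel (grid_pole m j) w)"
    if "w \<in> cball 0 (1 - m)" for w
    using pole_outside[OF that] by (simp add: f_def Re_sum Re_herglotz_kernel)
  have "u w \<le> ereal (Re (f w))" if "w \<in> sphere 0 (1 - m)" for w
    using le_grid_majorant_on_circle[OF le_one assms(3-5)] Re_f[of w] that by (simp add: J_def)
  moreover have "cball 0 (1 - m) \<subseteq> unit_disc"
    using \<open>0 < m\<close> by (auto simp: unit_disc_def)
  moreover have "f holomorphic_on ball 0 (1 - m)" "continuous_on (cball 0 (1 - m)) f"
    unfolding f_def using pole_outside by (auto intro!: holomorphic_intros continuous_intros)
  moreover have "0 < 1 - m"
    using \<open>m \<le> 1/8\<close> by simp
  ultimately have "u z \<le> ereal (Re (f z))"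
    using sh assms(6) unfolding subharmonic_on_disc_def by blast
  then show ?thesis
    using Re_f[OF assms(6)] by (simp add: J_def)
qed

section \<open>The majorant at the point \<open>(1 - s) e\<^sup>i\<^sup>\<phi>\<close>\<close>

lemma grid_pole_numerator_le:
  assumes "0 < m" "m \<le> s" "s \<le> 1"
  shows "(cmod (grid_pole m j))\<^sup>2 - (cmod (of_real (1 - s) * cis \<phi>))\<^sup>2 \<le> 2 * s"
proof -
  have "cmod (of_real (1 - s) * cis \<phi>) = 1 - s"
    using assms by (intro norm_of_real_mult_cis) simp
  then have "(cmod (grid_pole m j))\<^sup>2 - (cmod (of_real (1 - s) * cis \<phi>))\<^sup>2
      = (1 - 3*m/4)\<^sup>2 - (1 - s)\<^sup>2"
    using assms by (simp add: norm_grid_pole)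
  also have "\<dots> = (s - 3*m/4) * (2 - 3*m/4 - s)"
    by (simp add: power2_eq_square algebra_simps)
  also have "\<dots> \<le> s * 2"
    using assms by (intro mult_mono) auto
  finally show ?thesis
    by simp
qed

lemma poisson_kernel_grid_pole_le_near:
  assumes "0 < s" "s \<le> 1" "0 < m" "m \<le> s/4"
  shows "poisson_kernel (grid_pole m j) (of_real (1 - s) * cis \<phi>) \<le> 8 / s"
proof -
  let ?z = "of_real (1 - s) * cis \<phi>"
  have "cmod ?z = 1 - s"
    using assms by (intro norm_of_real_mult_cis) simp
  then have "s/2 \<le> cmod (grid_pole m j) - cmod ?z"
    using assms by (simp add: norm_grid_pole)
  also have "\<dots> \<le> cmod (grid_pole m j - ?z)"
    by (rule norm_triangle_ineq2)
  finally have "(s/2)\<^sup>2 \<le> (cmod (grid_pole m j - ?z))\<^sup>2"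
    using assms by (intro power_mono) auto
  then have "poisson_kernel (grid_pole m j) ?z \<le> (2 * s) / (s/2)\<^sup>2"
    using assms grid_pole_numerator_le[of m s j \<phi>] by (intro poisson_kernel_le) auto
  also have "\<dots> = 8 / s"
    using assms by (simp add: power2_eq_square field_simps)
  finally show ?thesis .
qed

lemma poisson_kernel_grid_pole_le_far:
  assumes "0 < s" "s < 1/2" "0 < m" "m \<le> s/4" "0 < \<eta>" "\<eta> \<le> pi"
    and far: "\<eta> \<le> \<bar>grid_point (m/2) j - \<phi>\<bar>" "\<bar>grid_point (m/2) j - \<phi>\<bar> \<le> 2*pi - \<eta>"
  shows "poisson_kernel (grid_pole m j) (of_real (1 - s) * cis \<phi>) \<le> 4 * s / (1 - cos \<eta>)"
proof -
  define x where "x = grid_point (m/2) j - \<phi>"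
  define R where "R = 1 - 3*m/4"
  have "0 < 1 - cos \<eta>"
    using cos_monotone_0_pi[of 0 \<eta>] assms by simp
  have "cos x \<le> cos \<eta>"
    using cos_le_cos_if_far_from_zero assms unfolding x_def by blast
  moreover have "1/4 \<le> R * (1 - s)"
    using assms mult_mono[of "1/2" R "1/2" "1 - s"] by (simp add: R_def)
  ultimately have "(1/4) * (1 - cos \<eta>) \<le> (R * (1 - s)) * (1 - cos x)"
    using \<open>0 < 1 - cos \<eta>\<close> by (intro mult_mono) auto
  moreover have "(cmod (grid_pole m j - of_real (1 - s) * cis \<phi>))\<^sup>2
      = R\<^sup>2 + (1 - s)\<^sup>2 - 2 * R * (1 - s) * cos x"
    unfolding grid_pole_def R_def x_def by (rule norm_scaled_cis_diff_squared)
  moreover have "R\<^sup>2 + (1 - s)\<^sup>2 - 2 * R * (1 - s) * cos x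
      = (R - (1 - s))\<^sup>2 + 2 * ((R * (1 - s)) * (1 - cos x))"
    by (simp add: power2_eq_square algebra_simps)
  ultimately have "(1 - cos \<eta>) / 2 \<le> (cmod (grid_pole m j - of_real (1 - s) * cis \<phi>))\<^sup>2"
    using zero_le_power2[of "R - (1 - s)"] by linarith
  then have "poisson_kernel (grid_pole m j) (of_real (1 - s) * cis \<phi>) \<le> (2 * s) / ((1 - cos \<eta>) / 2)"
    using assms \<open>0 < 1 - cos \<eta>\<close> grid_pole_numerator_le[of m s j \<phi>]
    by (intro poisson_kernel_le) auto
  then show ?thesis
    by simp
qed

lemma grid_cell_disjoint_cone_sublevel:
  assumes "j \<in> bad_cells u c m" "0 < m" "m < h"
  shows "{grid_point (m/2) j - m/4..<grid_point (m/2) j + m/4} \<inter> cone_sublevel u c h = {}"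
proof (intro equals0I)
  fix \<theta> assume \<theta>: "\<theta> \<in> {grid_point (m/2) j - m/4..<grid_point (m/2) j + m/4} \<inter> cone_sublevel u c h"
  obtain \<tau> where \<tau>: "ereal c < u (of_real (1 - m) * cis \<tau>)"
    "\<tau> \<in> {grid_point (m/2) j - m/4..<grid_point (m/2) j + m/4}"
    using bad_cell_near_bad_point[OF assms(1,2)] by blast
  from \<theta> have "1 - h < 1 - m \<longrightarrow> 1 - m < 1 \<longrightarrow> \<bar>\<tau> - \<theta>\<bar> < 1 - (1 - m)
      \<longrightarrow> u (of_real (1 - m) * cis \<tau>) < ereal c"
    unfolding cone_sublevel_def by blast
  moreover have "\<bar>\<tau> - \<theta>\<bar> < 1 - (1 - m)"
    using \<theta> \<tau>(2) assms(2) by auto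
  ultimately have "u (of_real (1 - m) * cis \<tau>) < ereal c"
    using assms(2,3) by auto
  with \<tau>(1) show False
    by simp
qed

lemma measure_near_bad_cells_le:
  assumes "0 < m" "m < h"
  shows "m/2 * card {j \<in> bad_cells u c m. \<bar>grid_point (m/2) j\<bar> < a}
    \<le> measure lebesgue ({-a - m/4<..<a + m/4} - cone_sublevel u c h)"
proof -
  define Jn where "Jn = {j \<in> bad_cells u c m. \<bar>grid_point (m/2) j\<bar> < a}"
  define cell where "cell j = {grid_point (m/2) j - m/4..<grid_point (m/2) j + m/4}" for j
  have "finite Jn"
    unfolding Jn_def using finite_bad_cells[OF assms(1)] by simp
  have cell_iff: "\<tau> \<in> cell j \<longleftrightarrow> grid_index (m/2) \<tau> = j" for \<tau> j
    using grid_index_eq_iff[of "m/2" \<tau> j] assms(1) by (simp add: cell_def)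
  then have "disjoint_family_on cell Jn"
    by (auto simp: disjoint_family_on_def cell_iff)
  then have "measure lebesgue (\<Union>j\<in>Jn. cell j) = (\<Sum>j\<in>Jn. measure lebesgue (cell j))"
    using assms(1) by (intro measure_finite_Union[OF \<open>finite Jn\<close> _ \<open>disjoint_family_on cell Jn\<close>])
      (auto simp: cell_def)
  also have "\<dots> = m/2 * card Jn"
    using assms(1) by (simp add: cell_def)
  finally have "m/2 * card Jn = measure lebesgue (\<Union>j\<in>Jn. cell j)" ..
  also have "\<dots> \<le> measure lebesgue ({-a - m/4<..<a + m/4} - cone_sublevel u c h)"
  proof (rule measure_mono_fmeasurable)
    show "(\<Union>j\<in>Jn. cell j) \<subseteq> {-a - m/4<..<a + m/4} - cone_sublevel u c h"
    proof (intro UN_least subsetI DiffI)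
      fix j \<theta> assume j: "j \<in> Jn" and \<theta>: "\<theta> \<in> cell j"
      then show "\<theta> \<in> {-a - m/4<..<a + m/4}"
        by (auto simp: Jn_def cell_def)
      show "\<theta> \<notin> cone_sublevel u c h"
        using grid_cell_disjoint_cone_sublevel[OF _ assms, of j u c] j \<theta>
        unfolding Jn_def cell_def by blast
    qed
    show "(\<Union>j\<in>Jn. cell j) \<in> sets lebesgue"
      using \<open>finite Jn\<close> by (auto simp: cell_def)
    show "{-a - m/4<..<a + m/4} - cone_sublevel u c h \<in> fmeasurable lebesgue"
      using closed_cone_sublevel
      by (intro fmeasurable_Diff bounded_set_imp_lmeasurable) (auto intro: borel_closed)
  qed
  finally show ?thesis
    by (simp add: Jn_def)
qed

lemma measure_widened_interval_diff_le:
  fixes A G :: "real set"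
  assumes "A \<in> sets lebesgue" "A \<subseteq> {-a<..<a}" "G \<in> sets lebesgue" "0 \<le> d"
  shows "measure lebesgue ({-a - d<..<a + d} - G)
    \<le> 2 * d + measure lebesgue ({-a<..<a} - A) + measure lebesgue (A - G)"
proof -
  let ?L = "{-a - d<..-a}" and ?R = "{a..<a + d}"
  have "{-a<..<a} \<in> fmeasurable lebesgue"
    by (rule bounded_set_imp_lmeasurable) auto
  then have A: "A \<in> fmeasurable lebesgue"
    using assms(2,1) by (rule fmeasurableI2)
  have fm: "?L \<in> fmeasurable lebesgue" "?R \<in> fmeasurable lebesgue"
    "{-a<..<a} - A \<in> fmeasurable lebesgue" "A - G \<in> fmeasurable lebesgue"
    using \<open>{-a<..<a} \<in> fmeasurable lebesgue\<close> A assms(1,3)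
    by (auto intro!: bounded_set_imp_lmeasurable fmeasurable_Diff)
  have "{-a - d<..<a + d} - G \<subseteq> ?L \<union> ?R \<union> ({-a<..<a} - A) \<union> (A - G)"
    by auto
  then have "measure lebesgue ({-a - d<..<a + d} - G)
      \<le> measure lebesgue (?L \<union> ?R \<union> ({-a<..<a} - A) \<union> (A - G))"
    using fm assms(3) by (intro measure_mono_fmeasurable) auto
  moreover have "measure lebesgue (?L \<union> ?R \<union> ({-a<..<a} - A) \<union> (A - G))
      \<le> measure lebesgue (?L \<union> ?R \<union> ({-a<..<a} - A)) + measure lebesgue (A - G)"
    using fm by (intro measure_Un_le) auto
  moreover have "measure lebesgue (?L \<union> ?R \<union> ({-a<..<a} - A))
      \<le> measure lebesgue (?L \<union> ?R) + measure lebesgue ({-a<..<a} - A)"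
    using fm by (intro measure_Un_le) auto
  moreover have "measure lebesgue (?L \<union> ?R) \<le> measure lebesgue ?L + measure lebesgue ?R"
    by (intro measure_Un_le) auto
  moreover have "measure lebesgue ?L + measure lebesgue ?R = 2 * d"
    using assms(4) by simp
  ultimately show ?thesis
    by linarith
qed

lemma grid_point_bad_cell_le:
  assumes "j \<in> bad_cells u c m" "0 < m"
  shows "\<bar>grid_point (m/2) j\<bar> \<le> pi + m/4"
proof -
  obtain \<tau> where "\<tau> \<in> {-pi<..pi}" "\<tau> \<in> {grid_point (m/2) j - m/4..<grid_point (m/2) j + m/4}"
    using bad_cell_near_bad_point[OF assms] by blast
  then show ?thesis
    by auto
qed

lemma far_bad_cells_sum_le:
  assumes "0 < s" "s < 1/2" "0 < m" "m \<le> s/4" "m \<le> pi/2 - \<eta>" "0 < \<eta>" "\<bar>\<phi>\<bar> < \<eta>"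
  shows "m * (\<Sum>j\<in>{j \<in> bad_cells u c m. 2*\<eta> \<le> \<bar>grid_point (m/2) j\<bar>}.
      poisson_kernel (grid_pole m j) (of_real (1 - s) * cis \<phi>)) \<le> 68 * s / (1 - cos \<eta>)"
proof -
  let ?F = "{j \<in> bad_cells u c m. 2*\<eta> \<le> \<bar>grid_point (m/2) j\<bar>}"
  have "m \<le> 1/8"
    using assms by linarith
  have "poisson_kernel (grid_pole m j) (of_real (1 - s) * cis \<phi>) \<le> 4 * s / (1 - cos \<eta>)"
    if "j \<in> ?F" for j
  proof (rule poisson_kernel_grid_pole_le_far)
    have "\<bar>grid_point (m/2) j\<bar> \<le> pi + m/4"
      using that grid_point_bad_cell_le[OF _ \<open>0 < m\<close>] by blast
    then show "\<bar>grid_point (m/2) j - \<phi>\<bar> \<le> 2*pi - \<eta>"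
      using assms by arith
    have "2*\<eta> \<le> \<bar>grid_point (m/2) j\<bar>"
      using that by simp
    then show "\<eta> \<le> \<bar>grid_point (m/2) j - \<phi>\<bar>"
      using assms by arith
  qed (use assms in auto)
  then have "m * (\<Sum>j\<in>?F. poisson_kernel (grid_pole m j) (of_real (1 - s) * cis \<phi>))
      \<le> m * (card ?F * (4 * s / (1 - cos \<eta>)))"
    using assms by (intro mult_left_mono sum_bounded_above) auto
  also have "\<dots> \<le> (m * card (bad_cells u c m)) * (4 * s / (1 - cos \<eta>))"
  proof -
    have "card ?F \<le> card (bad_cells u c m)"
      using finite_bad_cells[OF \<open>0 < m\<close>] by (intro card_mono) auto
    then show ?thesis
      using assms cos_monotone_0_pi[of 0 \<eta>] unfolding mult.assoc
      by (intro mult_left_mono mult_right_mono) auto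
  qed
  also have "\<dots> \<le> 17 * (4 * s / (1 - cos \<eta>))"
    using assms card_bad_cells_le[OF \<open>0 < m\<close> \<open>m \<le> 1/8\<close>] cos_monotone_0_pi[of 0 \<eta>]
    by (intro mult_right_mono) auto
  finally show ?thesis
    by simp
qed

lemma near_bad_cells_sum_le:
  assumes "0 < s" "s \<le> 1" "0 < m" "m \<le> s/4" "m < h"
  shows "m * (\<Sum>j\<in>{j \<in> bad_cells u c m. \<bar>grid_point (m/2) j\<bar> < a}.
      poisson_kernel (grid_pole m j) (of_real (1 - s) * cis \<phi>))
    \<le> 16 / s * measure lebesgue ({-a - m/4<..<a + m/4} - cone_sublevel u c h)"
proof -
  let ?N = "{j \<in> bad_cells u c m. \<bar>grid_point (m/2) j\<bar> < a}"
  have "m * (\<Sum>j\<in>?N. poisson_kernel (grid_pole m j) (of_real (1 - s) * cis \<phi>))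
      \<le> m * (card ?N * (8 / s))"
    using assms poisson_kernel_grid_pole_le_near by (intro mult_left_mono sum_bounded_above) auto
  also have "\<dots> = 16 / s * (m/2 * card ?N)"
    by simp
  also have "\<dots> \<le> 16 / s * measure lebesgue ({-a - m/4<..<a + m/4} - cone_sublevel u c h)"
    using assms measure_near_bad_cells_le by (intro mult_left_mono) auto
  finally show ?thesis .
qed

lemma subharmonic_bound_at_scale:
  assumes sh: "subharmonic_on_disc u" and le_one: "\<forall>z\<in>unit_disc. u z \<le> 1"
    and \<eta>: "0 < \<eta>" "\<eta> < pi/2" and s: "0 < s" "s < 1/2" and \<phi>: "\<bar>\<phi>\<bar> < \<eta>"
    and A: "A \<in> sets lebesgue" "A \<subseteq> {-2*\<eta><..<2*\<eta>}"
      "measure lebesgue ({-2*\<eta><..<2*\<eta>} - A) \<le> 8 * s\<^sup>2"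
    and h: "measure lebesgue (A - cone_sublevel u s h) < s\<^sup>2"
    and m: "0 < m" "m < h" "m \<le> s\<^sup>2/2" "m \<le> pi/2 - \<eta>"
  shows "u (of_real (1 - s) * cis \<phi>) \<le> ereal ((200 + 100 / (1 - cos \<eta>)) * s)"
proof -
  have "s\<^sup>2 \<le> s/2"
    using s by (simp add: power2_eq_square)
  then have m_le: "m \<le> s/4" "m \<le> 1/8"
    using m s by linarith+
  define P where "P j = poisson_kernel (grid_pole m j) (of_real (1 - s) * cis \<phi>)" for j
  define J where "J = bad_cells u s m"
  let ?near = "{j \<in> J. \<bar>grid_point (m/2) j\<bar> < 2*\<eta>}"
  let ?far = "{j \<in> J. 2*\<eta> \<le> \<bar>grid_point (m/2) j\<bar>}"
  have "cmod (of_real (1 - s) * cis \<phi>) = 1 - s"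
    using s by (intro norm_of_real_mult_cis) simp
  then have majorant: "u (of_real (1 - s) * cis \<phi>) \<le> ereal (s + m * sum P J)"
    unfolding P_def J_def using s m m_le by (intro subharmonic_le_grid_majorant[OF sh le_one]) auto
  have split: "sum P J = sum P ?near + sum P ?far"
    using finite_bad_cells[OF m(1)] unfolding J_def
    by (subst sum.union_disjoint[symmetric]) (auto intro: sum.cong)
  have "measure lebesgue ({-(2*\<eta>) - m/4<..<2*\<eta> + m/4} - cone_sublevel u s h)
      \<le> 2 * (m/4) + measure lebesgue ({-(2*\<eta>)<..<2*\<eta>} - A)
        + measure lebesgue (A - cone_sublevel u s h)"
    using A(1,2) closed_cone_sublevel[of u s h] m(1)
    by (intro measure_widened_interval_diff_le) auto
  then have "measure lebesgue ({-(2*\<eta>) - m/4<..<2*\<eta> + m/4} - cone_sublevel u s h) \<le> 10 * s\<^sup>2"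
    using A(3)[unfolded mult_minus_left] h m by linarith
  then have "16 / s * measure lebesgue ({-(2*\<eta>) - m/4<..<2*\<eta> + m/4} - cone_sublevel u s h)
      \<le> 16 / s * (10 * s\<^sup>2)"
    using s by (intro mult_left_mono) auto
  also have "\<dots> = 160 * s"
    using s by (simp add: power2_eq_square)
  finally have near: "m * sum P ?near \<le> 160 * s"
    unfolding P_def J_def using s
    by (intro order.trans[OF near_bad_cells_sum_le[OF s(1) _ m(1) m_le(1) m(2)]]) auto
  have far: "m * sum P ?far \<le> 68 * s / (1 - cos \<eta>)"
    unfolding P_def J_def using far_bad_cells_sum_le s m m_le \<eta> \<phi> by blast
  have "68 * s / (1 - cos \<eta>) \<le> 100 * s / (1 - cos \<eta>)"
    using s \<eta> cos_monotone_0_pi[of 0 \<eta>] by (intro divide_right_mono) auto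
  moreover have "(200 + 100 / (1 - cos \<eta>)) * s = 200 * s + 100 * s / (1 - cos \<eta>)"
    by (simp add: algebra_simps)
  ultimately have "s + m * sum P J \<le> (200 + 100 / (1 - cos \<eta>)) * s"
    unfolding split distrib_left using near far s by linarith
  with majorant show ?thesis
    by (simp add: order.trans)
qed

lemma subharmonic_bound_near_good_arc:
  assumes sh: "subharmonic_on_disc u" and le_one: "\<forall>z\<in>unit_disc. u z \<le> 1"
    and \<eta>: "0 < \<eta>" "\<eta> < pi/2" and s: "0 < s" "s < 1" and \<phi>: "\<bar>\<phi>\<bar> < \<eta>"
    and A: "A \<in> sets lebesgue" "A \<subseteq> {-2*\<eta><..<2*\<eta>}"
      "measure lebesgue ({-2*\<eta><..<2*\<eta>} - A) \<le> 8 * s\<^sup>2"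
    and nt: "\<forall>\<theta>\<in>A. nt_upper u (cis \<theta>) \<le> 0"
  shows "u (of_real (1 - s) * cis \<phi>) \<le> ereal ((200 + 100 / (1 - cos \<eta>)) * s)"
proof (cases "1/2 \<le> s")
  case True
  have "cmod (of_real (1 - s) * cis \<phi>) = 1 - s"
    using s by (intro norm_of_real_mult_cis) simp
  then have "u (of_real (1 - s) * cis \<phi>) \<le> 1"
    using le_one s by (simp add: unit_disc_def)
  moreover have "200 * s \<le> (200 + 100 / (1 - cos \<eta>)) * s"
    using s \<eta> cos_monotone_0_pi[of 0 \<eta>] by (intro mult_right_mono) auto
  ultimately show ?thesis
    using True by (simp add: one_ereal_def order.trans)
next
  case False
  have "{-2*\<eta><..<2*\<eta>} \<in> fmeasurable lebesgue"
    by (rule bounded_set_imp_lmeasurable) auto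
  then have "A \<in> fmeasurable lebesgue"
    using A(2,1) by (rule fmeasurableI2)
  then obtain h where h: "0 < h" "measure lebesgue (A - cone_sublevel u s h) < s\<^sup>2"
    by (rule exists_cone_height_measure_small[OF _ nt s(1), where \<epsilon> = "s\<^sup>2"]) (use s in simp)
  define m where "m = min (h/2) (min (s\<^sup>2/2) (pi/2 - \<eta>))"
  have "m \<le> s\<^sup>2/2"
    unfolding m_def by (rule min.coboundedI2[OF min.cobounded1])
  moreover have "0 < m" "m < h" "m \<le> pi/2 - \<eta>"
    using h s \<eta> unfolding m_def by (simp_all add: min_less_iff_disj)
  ultimately show ?thesis
    using subharmonic_bound_at_scale[OF sh le_one \<eta> s(1) _ \<phi> A h(2)] False by simp
qed

theorem mainTheorem2:
  fixes \<eta> :: real and \<gamma> :: "complex set"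
  assumes "0 < \<eta>" and "\<eta> < pi / 2"
    and "open_arc \<gamma>"
    and "\<forall>\<theta>\<in>{-2*\<eta><..<2*\<eta>}. cis \<theta> \<in> \<gamma>"
  shows "\<exists>C::real. 1 < C \<and>
    (\<forall>u B N. subharmonic_on_disc u \<longrightarrow> (\<forall>z\<in>unit_disc. u z \<le> 1) \<longrightarrow>
       B \<subseteq> \<gamma> \<longrightarrow> circle_measurable B \<longrightarrow> (1::real) < N \<longrightarrow>
       mes B / mes \<gamma> \<ge> 1 - 1 / N \<longrightarrow>
       (\<forall>\<zeta>\<in>B. nt_upper u \<zeta> \<le> 0) \<longrightarrow>
       (\<forall>\<zeta>::real. \<bar>\<zeta>\<bar> < \<eta> \<longrightarrow>
          u (complex_of_real (1 - 1 / sqrt N) * cis \<zeta>) \<le> ereal (C / sqrt N)))"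
proof (intro exI[of _ "200 + 100 / (1 - cos \<eta>)"] conjI allI impI)
  show "1 < 200 + 100 / (1 - cos \<eta>)"
    using cos_monotone_0_pi[of 0 \<eta>] assms(1,2) by (simp add: add_pos_pos)
  fix u B N \<phi>
  assume sh: "subharmonic_on_disc u" and le_one: "\<forall>z\<in>unit_disc. u z \<le> 1"
    and B: "B \<subseteq> \<gamma>" "circle_measurable B" and N: "1 < N" "1 - 1 / N \<le> mes B / mes \<gamma>"
    and nt: "\<forall>\<zeta>\<in>B. nt_upper u \<zeta> \<le> 0" and \<phi>: "\<bar>\<phi>\<bar> < \<eta>"
  define s where "s = 1 / sqrt N"
  have s: "0 < s" "s < 1" "s\<^sup>2 = 1 / N"
    using N by (simp_all add: s_def power_divide)
  define A where "A = circle_param B \<inter> {-2*\<eta><..<2*\<eta>}"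
  have "{-2*\<eta><..<2*\<eta>} \<subseteq> circle_param \<gamma>"
    using assms(2,4) by (auto simp: circle_param_def)
  then have "measure lebesgue ({-2*\<eta><..<2*\<eta>} - circle_param B) \<le> 2 * pi / N"
    by (intro measure_circle_param_diff_le[OF assms(3) B N]) auto
  also have "\<dots> \<le> 8 * s\<^sup>2"
    using pi_less_4 N unfolding s(3) by (simp add: divide_right_mono)
  finally have "measure lebesgue ({-2*\<eta><..<2*\<eta>} - A) \<le> 8 * s\<^sup>2"
    by (simp add: A_def Diff_Int)
  moreover have "A \<in> sets lebesgue" "\<forall>\<theta>\<in>A. nt_upper u (cis \<theta>) \<le> 0"
    using B(2) nt by (auto simp: A_def circle_measurable_def circle_param_def)
  ultimately have "u (of_real (1 - s) * cis \<phi>) \<le> ereal ((200 + 100 / (1 - cos \<eta>)) * s)"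
    using sh le_one assms(1,2) s \<phi> by (intro subharmonic_bound_near_good_arc) (auto simp: A_def)
  then show "u (of_real (1 - 1 / sqrt N) * cis \<phi>) \<le> ereal ((200 + 100 / (1 - cos \<eta>)) / sqrt N)"
    by (simp only: s_def times_divide_eq_right mult_1_right)
qed

end
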